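(* Let $k$ be a field of characteristic $0$ and let $F(X,Y), G(X,Y)\in k[X,Y]$. Assume there exist $A(X,Y), B(X,Y)\in k[X,Y]$ such that $$A(F(X,Y),G(X,Y))=X,\quad B(F(X,Y),G(X,Y))=Y,\quad F(A(X,Y),B(X,Y))=X,\quad G(A(X,Y),B(X,Y))=Y.$$ Then there exist $\mathcal{X}(t), \mathcal{Y}(t)\in k[X,Y][t]$ such that $$F(\mathcal{X}(t),\mathcal{Y}(t))=tX+(1-t)F(X,Y),\qquad G(\mathcal{X}(t),\mathcal{Y}(t))=tY+(1-t)G(X,Y),$$ with $\mathcal{X}(0)=X$, $\mathcal{Y}(0)=Y$, $\mathcal{X}(1)=A(X,Y)$ and $\mathcal{Y}(1)=B(X,Y)$. Moreover, the degree in $t$ of $\mathcal{X}(t)$ and of $\mathcal{Y}(t)$ is at most $\max\{\deg F(X,Y), \deg G(X,Y)\}$.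
   Context: For a polynomial $F\in k[X,Y]$, $\deg(F)$ denotes the total degree (maximum total degree of the monomials occurring in $F$). *)

theory Defs
  imports "HOL-Computational_Algebra.Polynomial"
begin

text \<open>Bivariate polynomials k[X,Y] are represented as 'k poly poly:
  the outer variable is Y, the inner variable (in the coefficients) is X.\<close>

definition varX :: "'k::comm_ring_1 poly poly" where
  "varX = [:[:0, 1:]:]"

definition varY :: "'k::comm_ring_1 poly poly" where
  "varY = [:0, 1:]"

definition eval2 :: "('k::comm_ring_1 \<Rightarrow> 'r::comm_ring_1) \<Rightarrow> 'k poly poly \<Rightarrow> 'r \<Rightarrow> 'r \<Rightarrow> 'r" where
  "eval2 emb F x y = poly (map_poly (\<lambda>p. poly (map_poly emb p) x) F) y"

definition total_degree :: "'k::comm_ring_1 poly poly \<Rightarrow> nat" where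
  "total_degree F = Max (insert 0 {i + j | i j. coeff (coeff F j) i \<noteq> 0})"

end

(*
  Take X(t) = A(F + t (X - F), G + t (Y - G)) and Y(t) = B(F + t (X - F), G + t (Y - G));
  the identities follow by composing with F and G, and t = 0, 1 give (X, Y) and (A, B).

  For the degree bound specialise (X, Y) to a point (x0, y0) over the algebraic closure at
  which the leading coefficient in t does not vanish. With f0 = F(x0, y0), g0 = G(x0, y0),
  the curve t |-> (X(t), Y(t)) is the injective parametrisation of the preimage under (F, G)
  of the line through (f0, g0) and (x0, y0), i.e. of the curve
  (y0 - g0)(F - f0) = (x0 - f0)(G - g0). A vertical line X = c meets this curve in at most
  max (deg F) (deg G) points, whereas for generic c it meets the parametrised curve in
  exactly deg X(t) points.
*)
theory Submission
  imports Defs "HOL-Algebra.Algebraic_Closure_Type"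
begin

hide_const (open) Polynomials.degree Polynomials.lead_coeff up_ring.coeff module.smult

definition is_ring_hom :: "('a::comm_ring_1 \<Rightarrow> 'b::comm_ring_1) \<Rightarrow> bool" where
  "is_ring_hom h \<longleftrightarrow> h 1 = 1 \<and> (\<forall>a b. h (a + b) = h a + h b) \<and> (\<forall>a b. h (a * b) = h a * h b)"

lemma
  assumes "is_ring_hom h"
  shows ring_hom_1: "h 1 = 1"
    and ring_hom_add: "h (a + b) = h a + h b"
    and ring_hom_mult: "h (a * b) = h a * h b"
  using assms by (simp_all add: is_ring_hom_def)

lemma ring_hom_0: "is_ring_hom h \<Longrightarrow> h 0 = 0"
  using ring_hom_add[of h 0 0] by simp

lemma ring_hom_diff: "is_ring_hom h \<Longrightarrow> h (a - b) = h a - h b"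
  using ring_hom_add[of h "a - b" b] by (simp add: eq_diff_eq)

lemma is_ring_hom_id: "is_ring_hom (\<lambda>x. x)"
  by (simp add: is_ring_hom_def)

lemma is_ring_hom_comp: "is_ring_hom h \<Longrightarrow> is_ring_hom g \<Longrightarrow> is_ring_hom (\<lambda>x. h (g x))"
  by (simp add: is_ring_hom_def)

lemma is_ring_hom_const_poly: "is_ring_hom e \<Longrightarrow> is_ring_hom (\<lambda>c. [:e c:])"
  by (simp add: is_ring_hom_def one_pCons)

lemma is_ring_hom_poly: "is_ring_hom (\<lambda>p. poly p x)"
  by (simp add: is_ring_hom_def)

lemma is_ring_hom_to_ac: "is_ring_hom to_ac"
  by (simp add: is_ring_hom_def)

lemma is_ring_hom_const_poly2: "is_ring_hom (\<lambda>c. [:[:c:]:])"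
  by (intro is_ring_hom_const_poly is_ring_hom_id)

lemma is_ring_hom_const_poly3: "is_ring_hom (\<lambda>c. [:[:[:c:]:]:])"
  by (intro is_ring_hom_const_poly is_ring_hom_id)

lemma poly_map_poly_pCons:
  "is_ring_hom h \<Longrightarrow> poly (map_poly h (pCons a p)) u = h a + u * poly (map_poly h p) u"
  by (simp add: map_poly_pCons ring_hom_0)

lemma poly_map_poly_add:
  assumes "is_ring_hom h"
  shows "poly (map_poly h (p + q)) u = poly (map_poly h p) u + poly (map_poly h q) u"
  by (induction p q rule: poly_induct2)
     (simp_all add: assms poly_map_poly_pCons ring_hom_add algebra_simps)

lemma poly_map_poly_smult:
  assumes "is_ring_hom h"
  shows "poly (map_poly h (smult a p)) u = h a * poly (map_poly h p) u"
  by (induction p) (simp_all add: assms ring_hom_0 poly_map_poly_pCons ring_hom_mult algebra_simps)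

lemma poly_map_poly_mult:
  assumes "is_ring_hom h"
  shows "poly (map_poly h (p * q)) u = poly (map_poly h p) u * poly (map_poly h q) u"
proof (induction p)
  case (pCons a p)
  have "pCons a p * q = smult a q + pCons 0 (p * q)"
    by simp
  with pCons show ?case
    by (simp add: assms poly_map_poly_add poly_map_poly_smult poly_map_poly_pCons ring_hom_0
        algebra_simps)
qed simp

lemma is_ring_hom_poly_map_poly: "is_ring_hom h \<Longrightarrow> is_ring_hom (\<lambda>p. poly (map_poly h p) u)"
  by (simp add: is_ring_hom_def poly_map_poly_add poly_map_poly_mult)

lemma ring_hom_poly_map_poly:
  assumes "is_ring_hom h" "is_ring_hom g"
  shows "h (poly (map_poly g p) u) = poly (map_poly (\<lambda>x. h (g x)) p) (h u)"
  by (induction p)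
     (simp_all add: assms is_ring_hom_comp poly_map_poly_pCons ring_hom_0 ring_hom_add ring_hom_mult)

lemma is_ring_hom_eval2: "is_ring_hom e \<Longrightarrow> is_ring_hom (\<lambda>P. eval2 e P u v)"
  unfolding eval2_def by (intro is_ring_hom_poly_map_poly)

lemma ring_hom_eval2:
  assumes "is_ring_hom h" "is_ring_hom e"
  shows "h (eval2 e P u v) = eval2 (\<lambda>c. h (e c)) P (h u) (h v)"
  unfolding eval2_def
  by (simp add: assms ring_hom_poly_map_poly is_ring_hom_poly_map_poly)

lemma eval2_const: "is_ring_hom e \<Longrightarrow> eval2 e [:[:c:]:] u v = e c"
  by (simp add: eval2_def map_poly_pCons ring_hom_0)

lemma eval2_varX: "is_ring_hom e \<Longrightarrow> eval2 e varX u v = u"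
  by (simp add: eval2_def varX_def map_poly_pCons ring_hom_0 ring_hom_1)

lemma eval2_varY: "is_ring_hom e \<Longrightarrow> eval2 e varY u v = v"
  by (simp add: eval2_def varY_def map_poly_pCons ring_hom_0 ring_hom_1)

lemma eval2_varX_varY: "eval2 (\<lambda>c. [:[:c:]:]) P varX varY = P"
proof -
  have inner: "poly (map_poly (\<lambda>c. [:[:c:]:]) p) varX = [:p:]" for p :: "'a poly"
    by (induction p) (simp_all add: map_poly_pCons varX_def)
  have "poly (map_poly (\<lambda>p. [:p:]) P) varY = P"
    by (induction P) (simp_all add: map_poly_pCons varY_def)
  then show ?thesis
    by (simp add: eval2_def inner)
qed

lemma eval2_compose:
  assumes "is_ring_hom e"
  shows "eval2 e (eval2 (\<lambda>c. [:[:c:]:]) C U V) x y = eval2 e C (eval2 e U x y) (eval2 e V x y)"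
  using ring_hom_eval2[OF is_ring_hom_eval2[OF assms] is_ring_hom_const_poly2, of C U V x y]
  by (simp add: assms eval2_const)

text \<open>\<open>segment_subst C F G\<close> is \<open>C(F + t (X - F), G + t (Y - G))\<close>, a polynomial in the
  outermost variable \<open>t\<close> with coefficients in \<open>k[X,Y]\<close>.\<close>

definition segment_subst ::
    "'k::comm_ring_1 poly poly \<Rightarrow> 'k poly poly \<Rightarrow> 'k poly poly \<Rightarrow> 'k poly poly poly" where
  "segment_subst C F G = eval2 (\<lambda>c. [:[:[:c:]:]:]) C [:F, varX - F:] [:G, varY - G:]"

lemma ring_hom_segment_subst:
  assumes "is_ring_hom h"
  shows "h (segment_subst C F G)
           = eval2 (\<lambda>c. h [:[:[:c:]:]:]) C (h [:F, varX - F:]) (h [:G, varY - G:])"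
  unfolding segment_subst_def by (rule ring_hom_eval2[OF assms is_ring_hom_const_poly3])

lemma eval2_segment_subst:
  "eval2 (\<lambda>c. [:[:[:c:]:]:]) H (segment_subst A F G) (segment_subst B F G)
     = segment_subst (eval2 (\<lambda>c. [:[:c:]:]) H A B) F G"
  unfolding segment_subst_def by (simp add: eval2_compose is_ring_hom_const_poly3)

lemma segment_subst_varX: "segment_subst varX F G = [:F, varX - F:]"
  by (simp add: segment_subst_def eval2_varX is_ring_hom_const_poly3)

lemma segment_subst_varY: "segment_subst varY F G = [:G, varY - G:]"
  by (simp add: segment_subst_def eval2_varY is_ring_hom_const_poly3)

lemma poly_segment_subst_0: "poly (segment_subst C F G) 0 = eval2 (\<lambda>c. [:[:c:]:]) C F G"
  by (simp add: ring_hom_segment_subst[OF is_ring_hom_poly])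

lemma poly_segment_subst_1: "poly (segment_subst C F G) 1 = C"
  by (simp add: ring_hom_segment_subst[OF is_ring_hom_poly] eval2_varX_varY)

lemma poly_map_poly_segment_subst:
  fixes C F G :: "'k::comm_ring_1 poly poly" and x y :: "'r::comm_ring_1"
  assumes "is_ring_hom e"
  defines "u \<equiv> eval2 e F x y" and "v \<equiv> eval2 e G x y"
  shows "poly (map_poly (\<lambda>c. eval2 e c x y) (segment_subst C F G)) t
           = eval2 e C (u + t * (x - u)) (v + t * (y - v))"
proof -
  have hom: "is_ring_hom (\<lambda>Q. poly (map_poly (\<lambda>c. eval2 e c x y) Q) t)"
    by (intro is_ring_hom_poly_map_poly is_ring_hom_eval2 assms)
  have eval2_0: "eval2 e 0 x y = 0"
    by (intro ring_hom_0 is_ring_hom_eval2 assms)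
  show ?thesis
    by (simp add: ring_hom_segment_subst[OF hom] assms map_poly_pCons eval2_0 eval2_const
        eval2_varX eval2_varY ring_hom_diff[OF is_ring_hom_eval2])
qed

lemma total_degree_ge:
  assumes "coeff (coeff F j) i \<noteq> 0"
  shows "i + j \<le> total_degree F"
proof -
  define K where "K = (\<Sum>j\<le>degree F. degree (coeff F j)) + degree F"
  have "{i + j |i j. coeff (coeff F j) i \<noteq> 0} \<subseteq> {..K}"
  proof
    fix n assume "n \<in> {i + j |i j. coeff (coeff F j) i \<noteq> 0}"
    then obtain i j where n: "n = i + j" and nz: "coeff (coeff F j) i \<noteq> 0"
      by blast
    then have j: "j \<le> degree F"
      by (metis coeff_0 le_degree)
    have "i \<le> degree (coeff F j)"
      using nz by (rule le_degree)
    also have "\<dots> \<le> (\<Sum>j\<le>degree F. degree (coeff F j))"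
      by (rule member_le_sum) (use j in auto)
    finally show "n \<in> {..K}"
      using j n by (simp add: K_def)
  qed
  then have "finite (insert 0 {i + j |i j. coeff (coeff F j) i \<noteq> 0})"
    by (meson finite_atMost finite_insert finite_subset)
  then show ?thesis
    unfolding total_degree_def by (rule Max_ge) (use assms in blast)
qed

lemma degree_le_total_degree: "degree F \<le> total_degree F"
  using total_degree_ge[of F "degree F" "degree (coeff F (degree F))"]
  by (cases "F = 0") simp_all

lemma degree_coeff_le_total_degree: "degree (coeff F j) \<le> total_degree F"
  using total_degree_ge[of F j "degree (coeff F j)"]
  by (cases "coeff F j = 0") simp_all

lemma degree_poly_const_le:
  fixes R :: "'a::comm_ring_1 poly poly"
  assumes "\<And>j. degree (coeff R j) \<le> m"
  shows "degree (poly R [:c:]) \<le> m"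
  using assms
proof (induction R)
  case (pCons a R)
  have "degree (poly R [:c:]) \<le> m"
    using pCons.IH pCons.prems[of "Suc _"] by simp
  then have "degree ([:c:] * poly R [:c:]) \<le> m"
    using degree_mult_le[of "[:c:]" "poly R [:c:]"] by simp
  then show ?case
    using pCons.prems[of 0] by (simp add: degree_add_le)
qed simp

text \<open>The two partial evaluations of \<open>F\<close>: \<open>eval_X e F x\<close> is \<open>F(x, _)\<close>, a polynomial in the
  second variable, and \<open>eval_Y e F y\<close> is \<open>F(_, y)\<close>, a polynomial in the first.\<close>

definition eval_X :: "('k::comm_ring_1 \<Rightarrow> 'r::comm_ring_1) \<Rightarrow> 'k poly poly \<Rightarrow> 'r \<Rightarrow> 'r poly"
  where "eval_X e F x = map_poly (\<lambda>p. poly (map_poly e p) x) F"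

definition eval_Y :: "('k::comm_ring_1 \<Rightarrow> 'r::comm_ring_1) \<Rightarrow> 'k poly poly \<Rightarrow> 'r \<Rightarrow> 'r poly"
  where "eval_Y e F y = poly (map_poly (map_poly e) F) [:y:]"

lemma poly_eval_X: "poly (eval_X e F x) y = eval2 e F x y"
  by (simp add: eval_X_def eval2_def)

lemma poly_eval_Y: "is_ring_hom e \<Longrightarrow> poly (eval_Y e F y) x = eval2 e F x y"
  by (induction F) (simp_all add: eval_Y_def eval2_def map_poly_pCons ring_hom_0)

lemma degree_eval_X_le: "degree (eval_X e F x) \<le> total_degree F"
  unfolding eval_X_def using map_poly_degree_leq degree_le_total_degree by (rule order_trans)

lemma degree_eval_Y_le: "degree (eval_Y e F y) \<le> total_degree F"
  unfolding eval_Y_def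
proof (rule degree_poly_const_le)
  fix j
  have "degree (map_poly e (coeff F j)) \<le> degree (coeff F j)"
    by (rule map_poly_degree_leq)
  also have "\<dots> \<le> total_degree F"
    by (rule degree_coeff_le_total_degree)
  finally show "degree (coeff (map_poly (map_poly e) F) j) \<le> total_degree F"
    by (simp add: coeff_map_poly)
qed

lemma proots_prod_mset_linear_factors: "proots (\<Prod>x\<in>#A. [:-x, 1:]) = (A :: 'a::field multiset)"
proof (induction A)
  case (add x A)
  have "proots [:-x, 1:] = {#x#}"
    using proots_linear_factor[of "-x"] by simp
  moreover have "(\<Prod>x\<in>#A. [:-x, 1:]) \<noteq> 0"
    by auto
  ultimately show ?case
    using add by (simp add: proots_mult del: mult_pCons_left)
qed simp

lemma size_proots_alg_closed: "size (proots (p :: 'a::alg_closed_field poly)) = degree p"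
proof (cases "p = 0")
  case False
  then obtain A where A: "size A = degree p" "p = smult (lead_coeff p) (\<Prod>x\<in>#A. [:-x, 1:])"
    using alg_closed_imp_factorization by blast
  have "proots p = proots (\<Prod>x\<in>#A. [:-x, 1:])"
    using False by (subst A(2)) simp
  then show ?thesis
    using A(1) by (simp add: proots_prod_mset_linear_factors)
qed simp

lemma card_roots_rsquarefree:
  fixes p :: "'a::alg_closed_field poly"
  assumes "rsquarefree p"
  shows "card {x. poly p x = 0} = degree p"
proof -
  have "p \<noteq> 0"
    using assms by (simp add: rsquarefree_def)
  have "count (proots p) x = count (mset_set {x. poly p x = 0}) x" for x
    using \<open>p \<noteq> 0\<close> assms poly_roots_finite[of p]
    by (cases "poly p x = 0") (simp_all add: rsquarefree_root_order order_0I)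
  then have "proots p = mset_set {x. poly p x = 0}"
    by (rule multiset_eqI)
  then show ?thesis
    using size_proots_alg_closed[of p] by simp
qed

lemma ex_rsquarefree_diff_const:
  fixes p :: "'a::field_char_0 poly"
  assumes "degree p > 0"
  shows "\<exists>c. rsquarefree (p - [:c:])"
proof -
  have "pderiv p \<noteq> 0"
    using assms by (simp add: pderiv_eq_0_iff)
  then have "finite (poly p ` {x. poly (pderiv p) x = 0})"
    by (simp add: poly_roots_finite)
  then obtain c where c: "c \<notin> poly p ` {x. poly (pderiv p) x = 0}"
    using ex_new_if_finite infinite_UNIV_char_0 by blast
  have "rsquarefree (p - [:c:])"
    unfolding rsquarefree_roots using c by (auto simp: pderiv_diff pderiv_pCons)
  then show ?thesis ..
qed

lemma degree_le_if_injective_onto_curve: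
  fixes P Q :: "'a::{alg_closed_field, field_char_0} poly" and H :: "'a \<Rightarrow> 'a poly"
  assumes on_curve: "\<And>t. poly (H (poly P t)) (poly Q t) = 0"
    and inj: "\<And>t s. poly P t = poly P s \<Longrightarrow> poly Q t = poly Q s \<Longrightarrow> t = s"
    and onto: "\<And>x y. poly (H x) y = 0 \<Longrightarrow> \<exists>t. poly P t = x \<and> poly Q t = y"
    and deg: "\<And>x. degree (H x) \<le> d"
  shows "degree P \<le> d"
proof (cases "degree P = 0")
  case False
  then obtain c where c: "rsquarefree (P - [:c:])"
    using ex_rsquarefree_diff_const by blast
  define S where "S = {t. poly P t = c}"
  have "degree (P - [:c:]) = degree P"
    using False by (simp add: diff_conv_add_uminus degree_add_eq_left)
  then have card_S: "card S = degree P"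
    using card_roots_rsquarefree[OF c] by (simp add: S_def)
  then have "finite S"
    using False card.infinite by fastforce
  have "inj_on (poly Q) S"
    using inj by (auto simp: S_def inj_on_def)
  show ?thesis
  proof (cases "H c = 0")
    case True
    have "y \<in> poly Q ` S" for y
      using onto[of c y] True by (auto simp: S_def)
    then have "poly Q ` S = UNIV"
      by blast
    then show ?thesis
      using \<open>finite S\<close> infinite_UNIV_char_0 by (metis finite_imageI)
  next
    case False
    have "poly Q ` S \<subseteq> {y. poly (H c) y = 0}"
      using on_curve by (auto simp: S_def)
    then have "card (poly Q ` S) \<le> card {y. poly (H c) y = 0}"
      using False by (intro card_mono poly_roots_finite)
    also have "\<dots> \<le> d"
      using card_poly_roots_bound[OF False] deg[of c] by linarith
    finally show ?thesis
      using card_image[OF \<open>inj_on (poly Q) S\<close>] card_S by simp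
  qed
qed simp

lemma proportional_imp_multiple:
  fixes a b p q :: "'a::field"
  assumes "b * p = a * q" and "a \<noteq> 0 \<or> b \<noteq> 0"
  shows "\<exists>t. p = t * a \<and> q = t * b"
proof (cases "a = 0")
  case True
  then show ?thesis
    using assms by (intro exI[of _ "q / b"]) simp
next
  case False
  then show ?thesis
    using assms(1) by (intro exI[of _ "p / a"]) (simp add: field_simps)
qed

text \<open>Here \<open>(x, y) \<mapsto> (poly (f x) y, poly (g x) y)\<close> is a bijection of the plane with inverse
  \<open>(\<alpha>, \<beta>)\<close>; the preimage of the line \<open>(u0 + t a, v0 + t b)\<close> is the curve
  \<open>b (poly (f x) y - u0) = a (poly (g x) y - v0)\<close>, parametrised injectively by \<open>(P, Q)\<close>.\<close>

lemma degree_inverse_image_of_line_le: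
  fixes P Q :: "'a::{alg_closed_field, field_char_0} poly"
    and f g :: "'a \<Rightarrow> 'a poly" and \<alpha> \<beta> :: "'a \<Rightarrow> 'a \<Rightarrow> 'a"
  assumes left_inverse: "\<And>u v. poly (f (\<alpha> u v)) (\<beta> u v) = u"
      "\<And>u v. poly (g (\<alpha> u v)) (\<beta> u v) = v"
    and right_inverse: "\<And>x y. \<alpha> (poly (f x) y) (poly (g x) y) = x"
      "\<And>x y. \<beta> (poly (f x) y) (poly (g x) y) = y"
    and deg: "\<And>x. degree (f x) \<le> d" "\<And>x. degree (g x) \<le> d"
    and P: "\<And>t. poly P t = \<alpha> (u0 + t * a) (v0 + t * b)"
    and Q: "\<And>t. poly Q t = \<beta> (u0 + t * a) (v0 + t * b)"
  shows "degree P \<le> d"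
proof (cases "a = 0 \<and> b = 0")
  case True
  then have "poly P = poly [:\<alpha> u0 v0:]"
    using P by auto
  then show ?thesis
    by (simp add: poly_eq_poly_eq_iff)
next
  case False
  define H where "H x = smult b (f x - [:u0:]) - smult a (g x - [:v0:])" for x
  have line: "poly (f (poly P t)) (poly Q t) = u0 + t * a"
    "poly (g (poly P t)) (poly Q t) = v0 + t * b" for t
    by (simp_all add: P Q left_inverse)
  show ?thesis
  proof (rule degree_le_if_injective_onto_curve[where H = H])
    show "poly (H (poly P t)) (poly Q t) = 0" for t
      by (simp add: H_def line algebra_simps)
    show "t = s" if "poly P t = poly P s" "poly Q t = poly Q s" for t s
    proof -
      have "u0 + t * a = u0 + s * a" "v0 + t * b = v0 + s * b"
        using line[of t] line[of s] that by metis+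
      then show ?thesis
        using False by auto
    qed
    show "\<exists>t. poly P t = x \<and> poly Q t = y" if "poly (H x) y = 0" for x y
    proof -
      have "b * (poly (f x) y - u0) = a * (poly (g x) y - v0)"
        using that by (simp add: H_def)
      then obtain t where "poly (f x) y - u0 = t * a" "poly (g x) y - v0 = t * b"
        using proportional_imp_multiple False by blast
      then have "u0 + t * a = poly (f x) y" "v0 + t * b = poly (g x) y"
        by (simp_all add: algebra_simps)
      then show ?thesis
        by (intro exI[of _ t]) (simp add: P Q right_inverse)
    qed
    show "degree (H x) \<le> d" for x
      unfolding H_def
      by (intro degree_diff_le order_trans[OF degree_smult_le]) (simp_all add: deg)
  qed
qed

lemma ex_eval2_nonzero:
  fixes c :: "'k::comm_ring_1 poly poly" and e :: "'k \<Rightarrow> 'r::field_char_0"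
  assumes "is_ring_hom e" "inj e" "c \<noteq> 0"
  shows "\<exists>x y. eval2 e c x y \<noteq> 0"
proof -
  have e_nonzero: "e a \<noteq> 0" if "a \<noteq> 0" for a
    using that assms(2) ring_hom_0[OF assms(1)] by (metis injD)
  have "map_poly e (lead_coeff c) \<noteq> 0"
    using assms(3) by (simp add: map_poly_eq_0_iff ring_hom_0[OF assms(1)] e_nonzero)
  then obtain x where x: "poly (map_poly e (lead_coeff c)) x \<noteq> 0"
    using poly_all_0_iff_0 by blast
  then have "lead_coeff (eval_X e c x) \<noteq> 0"
    by (simp add: eval_X_def lead_coeff_map_poly_nz)
  then obtain y where "poly (eval_X e c x) y \<noteq> 0"
    using poly_all_0_iff_0 by force
  then show ?thesis
    by (auto simp: poly_eval_X)
qed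

lemma degree_le_if_specialisations_le:
  fixes Z :: "'k::comm_ring_1 poly poly poly" and e :: "'k \<Rightarrow> 'r::field_char_0"
  assumes "is_ring_hom e" "inj e"
    and "\<And>x y. degree (map_poly (\<lambda>c. eval2 e c x y) Z) \<le> d"
  shows "degree Z \<le> d"
proof (cases "Z = 0")
  case False
  then obtain x y where "eval2 e (lead_coeff Z) x y \<noteq> 0"
    using ex_eval2_nonzero[OF assms(1,2)] by force
  then have "degree (map_poly (\<lambda>c. eval2 e c x y) Z) = degree Z"
    by (rule map_poly_degree_eq)
  then show ?thesis
    using assms(3)[of x y] by simp
qed simp

lemma degree_segment_subst_le:
  fixes F G A B :: "'k::field_char_0 poly poly"
  assumes "eval2 (\<lambda>c. [:[:c:]:]) A F G = varX" "eval2 (\<lambda>c. [:[:c:]:]) B F G = varY"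
    and "eval2 (\<lambda>c. [:[:c:]:]) F A B = varX" "eval2 (\<lambda>c. [:[:c:]:]) G A B = varY"
  shows "degree (segment_subst A F G) \<le> max (total_degree F) (total_degree G)"
    and "degree (segment_subst B F G) \<le> max (total_degree F) (total_degree G)"
proof -
  define d where "d = max (total_degree F) (total_degree G)"
  define ev where "ev P x y = eval2 to_ac P x y" for P :: "'k poly poly" and x y
  have inverse: "ev A (ev F x y) (ev G x y) = x" "ev B (ev F x y) (ev G x y) = y"
    "ev F (ev A x y) (ev B x y) = x" "ev G (ev A x y) (ev B x y) = y" for x y
    unfolding ev_def eval2_compose[OF is_ring_hom_to_ac, symmetric] assms
    by (simp_all add: eval2_varX eval2_varY is_ring_hom_to_ac)
  have "degree (map_poly (\<lambda>c. ev c x y) (segment_subst A F G)) \<le> d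
      \<and> degree (map_poly (\<lambda>c. ev c x y) (segment_subst B F G)) \<le> d" for x y
  proof -
    let ?u = "ev F x y" and ?v = "ev G x y"
    have line: "poly (map_poly (\<lambda>c. ev c x y) (segment_subst C F G)) t
                  = ev C (?u + t * (x - ?u)) (?v + t * (y - ?v))" for C t
      unfolding ev_def by (rule poly_map_poly_segment_subst[OF is_ring_hom_to_ac])
    have "degree (map_poly (\<lambda>c. ev c x y) (segment_subst A F G)) \<le> d"
      by (rule degree_inverse_image_of_line_le[where f = "eval_X to_ac F" and g = "eval_X to_ac G"
            and \<beta> = "ev B" and Q = "map_poly (\<lambda>c. ev c x y) (segment_subst B F G)"])
         (simp_all add: line inverse poly_eval_X flip: ev_def,
          simp_all add: d_def le_max_iff_disj degree_eval_X_le)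
    moreover have "degree (map_poly (\<lambda>c. ev c x y) (segment_subst B F G)) \<le> d"
      \<comment> \<open>the same argument with the two coordinates of the plane exchanged\<close>
      by (rule degree_inverse_image_of_line_le[where f = "eval_Y to_ac F" and g = "eval_Y to_ac G"
            and \<beta> = "ev A" and Q = "map_poly (\<lambda>c. ev c x y) (segment_subst A F G)"])
         (simp_all add: line inverse poly_eval_Y is_ring_hom_to_ac flip: ev_def,
          simp_all add: d_def le_max_iff_disj degree_eval_Y_le)
    ultimately show ?thesis ..
  qed
  then show "degree (segment_subst A F G) \<le> d" "degree (segment_subst B F G) \<le> d"
    using degree_le_if_specialisations_le[OF is_ring_hom_to_ac inj_to_ac] unfolding ev_def
    by blast+
qed

theorem lemma3p1:
  fixes F G A B :: "'k::field_char_0 poly poly"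
  assumes "eval2 (\<lambda>c. [:[:c:]:]) A F G = varX"
      and "eval2 (\<lambda>c. [:[:c:]:]) B F G = varY"
      and "eval2 (\<lambda>c. [:[:c:]:]) F A B = varX"
      and "eval2 (\<lambda>c. [:[:c:]:]) G A B = varY"
  shows "\<exists>\<X> \<Y> :: 'k poly poly poly.
           eval2 (\<lambda>c. [:[:[:c:]:]:]) F \<X> \<Y> = [:0, 1:] * [:varX:] + (1 - [:0, 1:]) * [:F:]
         \<and> eval2 (\<lambda>c. [:[:[:c:]:]:]) G \<X> \<Y> = [:0, 1:] * [:varY:] + (1 - [:0, 1:]) * [:G:]
         \<and> poly \<X> 0 = varX \<and> poly \<Y> 0 = varY
         \<and> poly \<X> 1 = A \<and> poly \<Y> 1 = B
         \<and> degree \<X> \<le> max (total_degree F) (total_degree G)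
         \<and> degree \<Y> \<le> max (total_degree F) (total_degree G)"
proof (intro exI conjI)
  have interpolation: "[:0, 1:] * [:H:] + (1 - [:0, 1:]) * [:K:] = [:K, H - K:]" for H K :: "'k poly poly"
    by (simp add: poly_eq_iff coeff_pCons split: nat.split)
  show "eval2 (\<lambda>c. [:[:[:c:]:]:]) F (segment_subst A F G) (segment_subst B F G)
          = [:0, 1:] * [:varX:] + (1 - [:0, 1:]) * [:F:]"
    unfolding interpolation by (simp add: eval2_segment_subst assms(3) segment_subst_varX)
  show "eval2 (\<lambda>c. [:[:[:c:]:]:]) G (segment_subst A F G) (segment_subst B F G)
          = [:0, 1:] * [:varY:] + (1 - [:0, 1:]) * [:G:]"
    unfolding interpolation by (simp add: eval2_segment_subst assms(4) segment_subst_varY)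
qed (simp_all add: poly_segment_subst_0 poly_segment_subst_1 assms(1,2)
      degree_segment_subst_le[OF assms])

end
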